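(* Let $\lambda$ be a cardinal with $\lambda^{\aleph_0}=\lambda$, let $(\mathscr T,\bar{\mathbf I})$ be a $\lambda^+$-complete tagged tree, and let $g:\mathscr T\to\lambda$. Then there is a tree $\mathscr T^\dagger$ with $(\mathscr T,\bar{\mathbf I})\le^*(\mathscr T^\dagger,\bar{\mathbf I})$ and a function $g^\dagger:\omega\to\lambda$ such that $g(\eta)=g^\dagger(\ell g(\eta))$ for all $\eta\in\mathscr T^\dagger$.
   Context: A tree is a nonempty set $\mathscr T$ of finite sequences of ordinals, closed under initial segments, such that every $\eta\in\mathscr T$ has at least one immediate successor in $\mathscr T$; $\mathrm{Succ}_{\mathscr T}(\eta)=\{\eta^\frown\langle\alpha\rangle:\eta^\frown\langle\alpha\rangle\in\mathscr T\}$; $\ell g(\eta)$ is the length of $\eta$. An ideal on a set $X$ is a family of subsets of $X$ containing all singletons, closed under subsets and finite unions, and not containing $X$; it is $\mu$-complete if closed under unions of fewer than $\mu$ members. A tagged tree is a pair $(\mathscr T,\bar{\mathbf I})$ where $\mathscr T$ is a tree and $\bar{\mathbf I}$ assigns to some (possibly all) $\eta\in\mathscr T$ an ideal $\mathbf I_\eta$ on a set $\mathrm{Dom}(\mathbf I_\eta)\supseteq\mathrm{Succ}_{\mathscr T}(\eta)$; it is $\mu$-complete if every defined $\mathbf I_\eta$ is $\mu$-complete. $\eta$ is a splitting point if $\mathbf I_\eta$ is defined and $\mathrm{Succ}_{\mathscr T}(\eta)\notin\mathbf I_\eta$. For trees $\mathscr T'\subseteq\mathscr T$, $(\mathscr T,\bar{\mathbf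 I})\le^*(\mathscr T',\bar{\mathbf I})$ means: for every $\eta\in\mathscr T'$ which is a splitting point of $(\mathscr T,\bar{\mathbf I})$ we have $\mathrm{Succ}_{\mathscr T'}(\eta)\notin\mathbf I_\eta$. *)

theory Defs
  imports Main
begin

definition Succ :: "'a list set \<Rightarrow> 'a list \<Rightarrow> 'a list set" where
  "Succ T \<eta> = {\<eta> @ [a] | a. \<eta> @ [a] \<in> T}"

definition is_tree :: "'a list set \<Rightarrow> bool" where
  "is_tree T \<longleftrightarrow> T \<noteq> {} \<and> (\<forall>\<eta>\<in>T. \<forall>n. take n \<eta> \<in> T) \<and> (\<forall>\<eta>\<in>T. Succ T \<eta> \<noteq> {})"

definition ideal_on :: "'x set \<Rightarrow> 'x set set \<Rightarrow> bool" where
  "ideal_on X I \<longleftrightarrow>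
     (\<forall>A\<in>I. A \<subseteq> X) \<and> (\<forall>x\<in>X. {x} \<in> I) \<and>
     (\<forall>A\<in>I. \<forall>B. B \<subseteq> A \<longrightarrow> B \<in> I) \<and>
     (\<forall>A\<in>I. \<forall>B\<in>I. A \<union> B \<in> I) \<and> X \<notin> I"

definition complete_ideal :: "'c rel \<Rightarrow> 'x set \<Rightarrow> 'x set set \<Rightarrow> bool" where
  "complete_ideal mu X I \<longleftrightarrow> ideal_on X I \<and>
     (\<forall>F. F \<subseteq> I \<and> (card_of F, mu) \<in> ordLess \<longrightarrow> \<Union>F \<in> I)"

text \<open>A tagging assigns to some nodes eta a pair (Dom(I_eta), I_eta).\<close>
type_synonym 'a tagging = "'a list \<Rightarrow> ('a list set \<times> 'a list set set) option"

definition tagged_tree :: "'a list set \<Rightarrow> 'a tagging \<Rightarrow> bool" where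
  "tagged_tree T Ib \<longleftrightarrow> is_tree T \<and>
     (\<forall>\<eta> D I. Ib \<eta> = Some (D, I) \<longrightarrow> \<eta> \<in> T \<and> ideal_on D I \<and> Succ T \<eta> \<subseteq> D)"

definition complete_tagged_tree :: "'c rel \<Rightarrow> 'a list set \<Rightarrow> 'a tagging \<Rightarrow> bool" where
  "complete_tagged_tree mu T Ib \<longleftrightarrow> tagged_tree T Ib \<and>
     (\<forall>\<eta> D I. Ib \<eta> = Some (D, I) \<longrightarrow> complete_ideal mu D I)"

definition splitting_point :: "'a list set \<Rightarrow> 'a tagging \<Rightarrow> 'a list \<Rightarrow> bool" where
  "splitting_point T Ib \<eta> \<longleftrightarrow> (\<exists>D I. Ib \<eta> = Some (D, I) \<and> Succ T \<eta> \<notin> I)"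

definition le_star :: "'a list set \<Rightarrow> 'a tagging \<Rightarrow> 'a list set \<Rightarrow> bool" where
  "le_star T Ib T' \<longleftrightarrow> T' \<subseteq> T \<and>
     (\<forall>\<eta>\<in>T'. splitting_point T Ib \<eta> \<longrightarrow> (\<forall>D I. Ib \<eta> = Some (D, I) \<longrightarrow> Succ T' \<eta> \<notin> I))"

end

theory Submission
  imports Defs
begin

text \<open>Fix a candidate \<open>h : \<omega> \<rightarrow> \<lambda>\<close>. The ideal player tries to refute \<open>h\<close> by deleting, at every
  splitting point, a set of successors from the ideal there. \<open>h\<close> is refuted at a node if for some
  such choice every branch from that node along which \<open>g\<close> agrees with \<open>h\<close> and which avoids the
  deleted sets is finite. Refutations of the successors outside a small set glue to a refutation
  of the node, so if \<open>h\<close> is not refuted at the root, the unrefuted nodes have a positive set of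
  unrefuted successors at every splitting point and form the required subtree. If every \<open>h\<close> were
  refuted, then since there are only \<open>\<lambda>\<^sup>\<aleph>\<^sup>0 = \<lambda>\<close> candidates, \<open>\<lambda>\<^sup>+\<close>-completeness keeps the union of all
  deleted sets at each node small; a branch avoiding all of them yields, via its \<open>g\<close>-values, a
  candidate that is not refuted.\<close>

lemma Succ_iff: "\<nu> \<in> Succ T \<eta> \<longleftrightarrow> (\<exists>a. \<nu> = \<eta> @ [a] \<and> \<nu> \<in> T)"
  unfolding Succ_def by auto

lemma Succ_subset: "Succ T \<eta> \<subseteq> T"
  unfolding Succ_def by auto

lemma is_tree_Nil: "is_tree T \<Longrightarrow> [] \<in> T"
  unfolding is_tree_def by (metis ex_in_conv take0)

lemma ideal_on_empty: "ideal_on D I \<Longrightarrow> D \<noteq> {} \<Longrightarrow> {} \<in> I"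
  unfolding ideal_on_def by (meson empty_subsetI ex_in_conv)

lemma ideal_on_downward_closed: "ideal_on D I \<Longrightarrow> A \<in> I \<Longrightarrow> B \<subseteq> A \<Longrightarrow> B \<in> I"
  unfolding ideal_on_def by blast

lemma complete_ideal_UN:
  assumes "complete_ideal mu D I" and "(card_of S, mu) \<in> ordLess" and "\<forall>s\<in>S. A s \<in> I"
  shows "(\<Union>s\<in>S. A s) \<in> I"
proof -
  have "(card_of (A ` S), mu) \<in> ordLess"
    using card_of_image assms(2) ordLeq_ordLess_trans by blast
  then show ?thesis using assms(1,3) unfolding complete_ideal_def by blast
qed

lemma acc_no_descending_chain:
  assumes "\<forall>n. (f (Suc n), f n) \<in> r"
  shows "f 0 \<notin> Wellfounded.acc r"
proof -
  have "x \<notin> range f" if "x \<in> Wellfounded.acc r" for x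
    using that
  proof (induction rule: acc_induct_rule)
    case (1 x)
    show ?case
    proof
      assume "x \<in> range f"
      then obtain n where "x = f n" by blast
      then have "(f (Suc n), x) \<in> r" using assms by simp
      then show False using 1 by blast
    qed
  qed
  then show ?thesis by blast
qed

lemma acc_transfer:
  assumes "x \<in> Wellfounded.acc r" and "P x"
    and "\<And>x y. P x \<Longrightarrow> (y, x) \<in> r' \<Longrightarrow> (y, x) \<in> r \<and> P y"
  shows "x \<in> Wellfounded.acc r'"
  using assms(1,2)
proof (induction rule: acc_induct_rule)
  case (1 x)
  show ?case
  proof (rule accI)
    fix y assume "(y, x) \<in> r'"
    then have "(y, x) \<in> r" and "P y" using assms(3) \<open>P x\<close> by blast+
    then show "y \<in> Wellfounded.acc r'" using 1 by blast
  qed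
qed

definition paths_in :: "'a list set \<Rightarrow> 'a list set" where
  "paths_in G = {\<eta>. \<forall>k. take k \<eta> \<in> G}"

lemma paths_in_subset: "paths_in G \<subseteq> G"
proof
  fix \<eta> assume "\<eta> \<in> paths_in G"
  then have "take (length \<eta>) \<eta> \<in> G" unfolding paths_in_def by blast
  then show "\<eta> \<in> G" by simp
qed

lemma Succ_paths_in:
  assumes "\<eta> \<in> paths_in G"
  shows "Succ T \<eta> \<inter> G \<subseteq> Succ (paths_in G) \<eta>"
proof
  fix \<nu> assume \<nu>: "\<nu> \<in> Succ T \<eta> \<inter> G"
  then obtain a where a: "\<nu> = \<eta> @ [a]" by (auto simp: Succ_iff)
  have "take k \<nu> \<in> G" for k
  proof (cases "k \<le> length \<eta>")
    case True
    then have "take k \<nu> = take k \<eta>" unfolding a by simp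
    then show ?thesis using assms unfolding paths_in_def by simp
  next
    case False
    then have "take k \<nu> = \<nu>" unfolding a by simp
    then show ?thesis using \<nu> by simp
  qed
  then have "\<nu> \<in> paths_in G" unfolding paths_in_def by blast
  then show "\<nu> \<in> Succ (paths_in G) \<eta>" using a by (simp add: Succ_iff)
qed

lemma is_tree_paths_in:
  assumes "[] \<in> G" and "\<And>\<eta>. \<eta> \<in> G \<Longrightarrow> Succ T \<eta> \<inter> G \<noteq> {}"
  shows "is_tree (paths_in G)"
  unfolding is_tree_def
proof (intro conjI ballI allI)
  have "[] \<in> paths_in G" using assms(1) unfolding paths_in_def by simp
  then show "paths_in G \<noteq> {}" by blast
next
  fix \<eta> n assume "\<eta> \<in> paths_in G"
  then show "take n \<eta> \<in> paths_in G" unfolding paths_in_def by (simp add: min_def)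
next
  fix \<eta> assume "\<eta> \<in> paths_in G"
  then show "Succ (paths_in G) \<eta> \<noteq> {}"
    using assms(2) paths_in_subset Succ_paths_in by blast
qed

lemma branch_avoiding:
  assumes "is_tree T" and "\<And>\<eta>. \<eta> \<in> T \<Longrightarrow> \<not> Succ T \<eta> \<subseteq> U \<eta>"
  shows "\<exists>br. br 0 = [] \<and> (\<forall>n. br (Suc n) \<in> Succ T (br n) - U (br n))"
proof -
  define choose_succ where "choose_succ \<eta> = (SOME \<nu>. \<nu> \<in> Succ T \<eta> - U \<eta>)" for \<eta>
  have choose_succ: "choose_succ \<eta> \<in> Succ T \<eta> - U \<eta>" if "\<eta> \<in> T" for \<eta>
  proof -
    have "\<exists>\<nu>. \<nu> \<in> Succ T \<eta> - U \<eta>" using assms(2)[OF that] by blast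
    then show ?thesis unfolding choose_succ_def by (rule someI_ex)
  qed
  define br where "br n = (choose_succ ^^ n) []" for n
  have "br n \<in> T" for n
  proof (induction n)
    case 0
    then show ?case using is_tree_Nil[OF assms(1)] by (simp add: br_def)
  next
    case (Suc n)
    then show ?case using choose_succ Succ_subset by (fastforce simp: br_def)
  qed
  then have "br (Suc n) \<in> Succ T (br n) - U (br n)" for n
    using choose_succ by (simp add: br_def)
  moreover have "br 0 = []" by (simp add: br_def)
  ultimately show ?thesis by blast
qed

lemma branch_take:
  assumes "br 0 = []" and "\<forall>n. br (Suc n) \<in> Succ T (br n)"
  shows "length (br n) = n \<and> (\<forall>k\<le>n. take k (br n) = br k)"
proof (induction n)
  case 0
  then show ?case using assms(1) by simp
next
  case (Suc n)
  obtain a where "br (Suc n) = br n @ [a]" using assms(2) by (auto simp: Succ_iff)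
  then show ?case using Suc by (auto simp: le_Suc_eq)
qed

definition follows :: "('a list \<Rightarrow> 'b) \<Rightarrow> (nat \<Rightarrow> 'b) \<Rightarrow> 'a list \<Rightarrow> bool" where
  "follows g h \<eta> \<longleftrightarrow> (\<forall>k \<le> length \<eta>. g (take k \<eta>) = h k)"

definition admissible :: "'a list set \<Rightarrow> 'a tagging \<Rightarrow> 'a list \<Rightarrow> 'a list set \<Rightarrow> bool" where
  "admissible T Ib \<eta> A \<longleftrightarrow>
     (if splitting_point T Ib \<eta> then \<exists>D I. Ib \<eta> = Some (D, I) \<and> A \<in> I else A = {})"

text \<open>A deletion \<open>F \<xi>\<close> that is not admissible is ignored; this lets refutations of different
  subtrees be combined without checking admissibility away from the nodes that matter.\<close>

definition follow_step :: "'a list set \<Rightarrow> 'a tagging \<Rightarrow> ('a list \<Rightarrow> 'b) \<Rightarrow> (nat \<Rightarrow> 'b)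
    \<Rightarrow> ('a list \<Rightarrow> 'a list set) \<Rightarrow> ('a list \<times> 'a list) set" where
  "follow_step T Ib g h F =
     {(\<nu>, \<xi>). follows g h \<xi> \<and> \<nu> \<in> Succ T \<xi> \<and> (admissible T Ib \<xi> (F \<xi>) \<longrightarrow> \<nu> \<notin> F \<xi>)}"

definition refutable :: "'a list set \<Rightarrow> 'a tagging \<Rightarrow> ('a list \<Rightarrow> 'b) \<Rightarrow> (nat \<Rightarrow> 'b)
    \<Rightarrow> 'a list \<Rightarrow> bool" where
  "refutable T Ib g h \<eta> \<longleftrightarrow> (\<exists>F. \<eta> \<in> Wellfounded.acc (follow_step T Ib g h F))"

lemma refutable_if_not_follows: "\<not> follows g h \<eta> \<Longrightarrow> refutable T Ib g h \<eta>"
  unfolding refutable_def by (auto intro: accI simp: follow_step_def)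

lemma refutable_if_successors_refutable:
  assumes "admissible T Ib \<eta> A"
    and "\<And>\<nu>. \<nu> \<in> Succ T \<eta> - A \<Longrightarrow> refutable T Ib g h \<nu>"
  shows "refutable T Ib g h \<eta>"
proof -
  define n where "n = Suc (length \<eta>)"
  have "\<forall>\<nu>\<in>Succ T \<eta> - A. \<exists>F. \<nu> \<in> Wellfounded.acc (follow_step T Ib g h F)"
    using assms(2) unfolding refutable_def by blast
  then obtain Fs where Fs: "\<forall>\<nu>\<in>Succ T \<eta> - A. \<nu> \<in> Wellfounded.acc (follow_step T Ib g h (Fs \<nu>))"
    by (rule bchoice[THEN exE])
  define F where "F \<xi> = (if \<xi> = \<eta> then A else Fs (take n \<xi>) \<xi>)" for \<xi>
  have succ_acc: "\<nu> \<in> Wellfounded.acc (follow_step T Ib g h F)" if \<nu>: "\<nu> \<in> Succ T \<eta> - A" for \<nu>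
  proof (rule acc_transfer[OF Fs[rule_format, OF \<nu>], where P = "\<lambda>\<xi>. n \<le> length \<xi> \<and> take n \<xi> = \<nu>"])
    show "n \<le> length \<nu> \<and> take n \<nu> = \<nu>" using \<nu> by (auto simp: n_def Succ_iff)
  next
    fix \<xi> \<zeta> assume \<xi>: "n \<le> length \<xi> \<and> take n \<xi> = \<nu>"
      and step: "(\<zeta>, \<xi>) \<in> follow_step T Ib g h F"
    have "F \<xi> = Fs \<nu> \<xi>" using \<xi> unfolding F_def n_def by auto
    then have "(\<zeta>, \<xi>) \<in> follow_step T Ib g h (Fs \<nu>)"
      using step by (simp add: follow_step_def)
    moreover obtain a where "\<zeta> = \<xi> @ [a]" using step by (auto simp: follow_step_def Succ_iff)
    ultimately show "(\<zeta>, \<xi>) \<in> follow_step T Ib g h (Fs \<nu>) \<and> n \<le> length \<zeta> \<and> take n \<zeta> = \<nu>"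
      using \<xi> by simp
  qed
  have "\<eta> \<in> Wellfounded.acc (follow_step T Ib g h F)"
  proof (rule accI)
    fix \<nu> assume "(\<nu>, \<eta>) \<in> follow_step T Ib g h F"
    then have "\<nu> \<in> Succ T \<eta> - A" using assms(1) by (simp add: follow_step_def F_def)
    then show "\<nu> \<in> Wellfounded.acc (follow_step T Ib g h F)" by (rule succ_acc)
  qed
  then show ?thesis unfolding refutable_def by blast
qed

lemma unrefutable_successors_positive:
  assumes "\<not> refutable T Ib g h \<eta>" and "splitting_point T Ib \<eta>" and "Ib \<eta> = Some (D, I)"
  shows "Succ T \<eta> \<inter> {\<nu>. \<not> refutable T Ib g h \<nu>} \<notin> I"
  using refutable_if_successors_refutable[of T Ib \<eta> "Succ T \<eta> \<inter> {\<nu>. \<not> refutable T Ib g h \<nu>}"]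
    assms unfolding admissible_def by auto

lemma unrefutable_successor_exists:
  assumes "tagged_tree T Ib" and "\<eta> \<in> T" and "\<not> refutable T Ib g h \<eta>"
  shows "Succ T \<eta> \<inter> {\<nu>. \<not> refutable T Ib g h \<nu>} \<noteq> {}"
proof (cases "splitting_point T Ib \<eta>")
  case True
  then obtain D I where DI: "Ib \<eta> = Some (D, I)" unfolding splitting_point_def by auto
  have "Succ T \<eta> \<noteq> {}" using assms(1,2) unfolding tagged_tree_def is_tree_def by blast
  then have "{} \<in> I" using ideal_on_empty assms(1) DI unfolding tagged_tree_def by blast
  then show ?thesis using unrefutable_successors_positive[OF assms(3) True DI] by auto
next
  case False
  then show ?thesis
    using refutable_if_successors_refutable[of T Ib \<eta> "{}"] assms(3)
    unfolding admissible_def by auto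
qed

lemma subtree_of_unrefutable:
  assumes "tagged_tree T Ib" and "\<not> refutable T Ib g h []"
  shows "\<exists>T'. is_tree T' \<and> le_star T Ib T' \<and> (\<forall>\<eta>\<in>T'. g \<eta> = h (length \<eta>))"
proof -
  define G where "G = {\<eta> \<in> T. \<not> refutable T Ib g h \<eta>}"
  have succ_G: "Succ T \<eta> \<inter> G = Succ T \<eta> \<inter> {\<nu>. \<not> refutable T Ib g h \<nu>}" for \<eta>
    using Succ_subset unfolding G_def by auto
  have "is_tree (paths_in G)"
  proof (rule is_tree_paths_in[where T = T])
    have "is_tree T" using assms(1) unfolding tagged_tree_def by blast
    then show "[] \<in> G" using is_tree_Nil assms(2) by (simp add: G_def)
  next
    fix \<eta> assume "\<eta> \<in> G"
    then show "Succ T \<eta> \<inter> G \<noteq> {}"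
      using unrefutable_successor_exists[OF assms(1)] succ_G unfolding G_def by auto
  qed
  moreover have "le_star T Ib (paths_in G)"
    unfolding le_star_def
  proof (intro conjI ballI impI allI)
    have "G \<subseteq> T" unfolding G_def by blast
    then show "paths_in G \<subseteq> T" using paths_in_subset by blast
  next
    fix \<eta> D I assume \<eta>: "\<eta> \<in> paths_in G" and sp: "splitting_point T Ib \<eta>"
      and DI: "Ib \<eta> = Some (D, I)"
    have "\<eta> \<in> G" using \<eta> paths_in_subset by blast
    then have "\<not> refutable T Ib g h \<eta>" by (simp add: G_def)
    then have "Succ T \<eta> \<inter> G \<notin> I"
      using unrefutable_successors_positive[OF _ sp DI] by (simp add: succ_G)
    moreover have "ideal_on D I" using assms(1) DI unfolding tagged_tree_def by blast
    ultimately show "Succ (paths_in G) \<eta> \<notin> I"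
      using Succ_paths_in[OF \<eta>] ideal_on_downward_closed by blast
  qed
  moreover have "g \<eta> = h (length \<eta>)" if "\<eta> \<in> paths_in G" for \<eta>
  proof -
    have "\<eta> \<in> G" using that paths_in_subset by blast
    then have "follows g h \<eta>" using refutable_if_not_follows unfolding G_def by blast
    then have "g (take (length \<eta>) \<eta>) = h (length \<eta>)" unfolding follows_def by blast
    then show ?thesis by simp
  qed
  ultimately show ?thesis by blast
qed

lemma Succ_not_covered_by_few_admissible:
  assumes "complete_tagged_tree mu T Ib" and "\<eta> \<in> T" and "(card_of S, mu) \<in> ordLess"
  shows "\<not> Succ T \<eta> \<subseteq> (\<Union>s\<in>{s \<in> S. admissible T Ib \<eta> (A s)}. A s)"
    (is "\<not> _ \<subseteq> ?U")
proof (cases "splitting_point T Ib \<eta>")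
  case True
  then obtain D I where DI: "Ib \<eta> = Some (D, I)" and "Succ T \<eta> \<notin> I"
    unfolding splitting_point_def by auto
  have "(card_of {s \<in> S. admissible T Ib \<eta> (A s)}, card_of S) \<in> ordLeq"
    by (rule card_of_mono1) blast
  then have "(card_of {s \<in> S. admissible T Ib \<eta> (A s)}, mu) \<in> ordLess"
    using assms(3) ordLeq_ordLess_trans by blast
  moreover have "complete_ideal mu D I"
    using assms(1) DI unfolding complete_tagged_tree_def by blast
  ultimately have "?U \<in> I"
    using DI True unfolding admissible_def by (intro complete_ideal_UN) auto
  moreover have "ideal_on D I"
    using assms(1) DI unfolding complete_tagged_tree_def tagged_tree_def by blast
  ultimately show ?thesis using \<open>Succ T \<eta> \<notin> I\<close> ideal_on_downward_closed by blast
next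
  case False
  then have "?U = {}" unfolding admissible_def by auto
  moreover have "Succ T \<eta> \<noteq> {}"
    using assms(1,2) unfolding complete_tagged_tree_def tagged_tree_def is_tree_def by blast
  ultimately show ?thesis by blast
qed

lemma exists_unrefutable:
  assumes "complete_tagged_tree mu T Ib" and "\<forall>\<eta>\<in>T. g \<eta> \<in> L"
    and "(card_of {h :: nat \<Rightarrow> 'b. \<forall>n. h n \<in> L}, mu) \<in> ordLess"
  shows "\<exists>h. (\<forall>n. h n \<in> L) \<and> \<not> refutable T Ib g h []"
proof (rule ccontr)
  define H where "H = {h :: nat \<Rightarrow> 'b. \<forall>n. h n \<in> L}"
  assume "\<not> ?thesis"
  then have "\<forall>h\<in>H. \<exists>F. [] \<in> Wellfounded.acc (follow_step T Ib g h F)"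
    unfolding refutable_def H_def by blast
  then obtain F where F: "\<forall>h\<in>H. [] \<in> Wellfounded.acc (follow_step T Ib g h (F h))"
    by (rule bchoice[THEN exE])
  define U where "U \<eta> = (\<Union>h\<in>{h \<in> H. admissible T Ib \<eta> (F h \<eta>)}. F h \<eta>)" for \<eta>
  have tree: "is_tree T" using assms(1) unfolding complete_tagged_tree_def tagged_tree_def by blast
  have "\<not> Succ T \<eta> \<subseteq> U \<eta>" if "\<eta> \<in> T" for \<eta>
    using Succ_not_covered_by_few_admissible[OF assms(1) that] assms(3)
    unfolding U_def H_def by blast
  then obtain br where br0: "br 0 = []" and br: "\<forall>n. br (Suc n) \<in> Succ T (br n) - U (br n)"
    using branch_avoiding[OF tree] by blast
  have "br n \<in> T" for n
    using br Succ_subset by (cases n) (auto simp: br0 is_tree_Nil[OF tree])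
  define h where "h n = g (br n)" for n
  have "h \<in> H" using assms(2) \<open>\<And>n. br n \<in> T\<close> unfolding H_def h_def by simp
  have "(br (Suc n), br n) \<in> follow_step T Ib g h (F h)" for n
    using branch_take[of br T, OF br0] br \<open>h \<in> H\<close>
    unfolding follow_step_def follows_def h_def U_def by auto
  then have "br 0 \<notin> Wellfounded.acc (follow_step T Ib g h (F h))"
    by (intro acc_no_descending_chain allI)
  then show False using F \<open>h \<in> H\<close> br0 by simp
qed

theorem mainTheorem2:
  fixes T :: "'a list set" and Ib :: "'a tagging"
    and L :: "'b set" and g :: "'a list \<Rightarrow> 'b"
  assumes "(BNF_Cardinal_Arithmetic.cexp (card_of L) natLeq, card_of L) \<in> ordIso"
    and "complete_tagged_tree (cardSuc (card_of L)) T Ib"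
    and "\<forall>\<eta>\<in>T. g \<eta> \<in> L"
  shows "\<exists>T'. is_tree T' \<and> le_star T Ib T' \<and>
           (\<exists>g' :: nat \<Rightarrow> 'b. (\<forall>n. g' n \<in> L) \<and> (\<forall>\<eta>\<in>T'. g \<eta> = g' (length \<eta>)))"
proof -
  have "{h :: nat \<Rightarrow> 'b. \<forall>n. h n \<in> L} = Func (Field natLeq) (Field (card_of L))"
    unfolding Func_def Field_natLeq Field_card_of by auto
  then have "(card_of {h :: nat \<Rightarrow> 'b. \<forall>n. h n \<in> L}, card_of L) \<in> ordIso"
    using assms(1) unfolding cexp_def by simp
  then have "(card_of {h :: nat \<Rightarrow> 'b. \<forall>n. h n \<in> L}, cardSuc (card_of L)) \<in> ordLess"
    using cardSuc_greater[OF card_of_Card_order] ordIso_ordLess_trans by blast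
  then obtain h where "\<forall>n. h n \<in> L" and "\<not> refutable T Ib g h []"
    using exists_unrefutable[OF assms(2,3)] by blast
  moreover have "tagged_tree T Ib" using assms(2) unfolding complete_tagged_tree_def by blast
  ultimately show ?thesis using subtree_of_unrefutable by blast
qed

end
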